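(* Let $d\ge3$, $\{\mathbb{P}^u\}$ satisfy (P1), (P2), (D), (S1), (S2), fix $u$, and let $A\subseteq \mathbb{R}^d$ be compact and $(b_N)$ positive reals. Let $\omega\in\Omega^{1/3,1/9}_{\mathrm{reg}}$. There exists a constant $c_4(\omega)$ and for each $\chi\in(0,1)$ a constant $c_5(\chi)>0$ such that: for integers $N\ge1$, $\ell_*\ge0$, $U_0\in\mathcal U^\omega_{\ell_*,N}$, $\epsilon\in\mathbb{N}$, $\chi\in(0,1)$, $\Sigma\in\mathcal S^\omega_{U_0,\epsilon,\chi}$, if $\ell\ge c_4(\omega)$ with $\epsilon\le\frac14 2^\ell$, $x_0\in\mathcal S_\infty\cap B(0,r_{1/3,4\cdot2^\ell})$ with $\widetilde\sigma^\omega_\ell(x_0)\in[\widetilde\alpha,1-\widetilde\alpha]$, and $y\in\mathcal S_\infty$ with $|y-x_0|\le\frac14 2^\ell$, then $$P^\omega_y[H_\Sigma<T_{B(x_0,5\cdot2^\ell)}]\ge c_5(\chi).$$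
   Context: Framework: $\Omega=\{0,1\}^{\mathbb{Z}^d}$, $\mathcal S=\{x:\omega(x)=1\}$, $\mathcal S_\infty$ vertices of infinite nearest-neighbour components, $B(x,r)$ closed $\ell^\infty$-ball in $\mathbb{Z}^d$, $|\cdot|$ Euclidean norm; assumptions (P1) ergodicity, (P2) monotonicity, (D) sprinkled decoupling, (S1) local uniqueness with rate $\ge(\log R)^{1+\Delta_S(u)}$, (S2) $\eta=\eta(u)=\mathbb{P}^u[0\in\mathcal S_\infty]>0$ continuous. $P^\omega_x$: continuous-time constant-speed simple random walk on $\mathcal S_\infty$; $H_U=\inf\{t\ge0:X_t\in U\}$, $T_U=\inf\{t\ge0:X_t\notin U\}$, $\tau_r=\inf\{t\ge0:|X_t-X_0|_\infty\ge r\}$. $r_{\alpha,R}=\exp(\kappa_{\mathrm{reg}}(\alpha)(\log R)^{1+\Delta_S})$ with $\kappa_{\mathrm{reg}}(\alpha)=\frac1{2d}(\kappa_{d2}(\alpha)\wedge c_{hk6})$. $\Omega^{\alpha,\vartheta}_{\mathrm{reg}}$: configurations with $\mathcal S_\infty$ nonempty connected and finite minimal scales $R_{\mathrm{den}}(\omega,\alpha)$ (volume regularity $(1-\alpha)\eta\le|\mathcal S_\infty\cap B(x,R)|/|B(x,R)|\le(1+\alpha)\eta$ for all $R\ge R_{\mathrm{den}}$, $x\in\mathcal S_\infty\cap B(0,r_{\alpha,R})$), $R_{\mathrm{hk}}(\omega,\alpha)$ (two-sided Gaussian heat kernel bound for all $R\ge R_{\mathrm{hk}}$, $x\in\mathcal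 S_\infty\cap B(0,2r_{\alpha,R})$, $y\in\mathcal S_\infty$, $t\ge R\vee|x-y|_1^{3/2}$), and $R_{\mathrm{khk}}(\omega,\alpha,\vartheta)$ (for integers $R\ge R_{\mathrm{khk}}$, $P^\omega_x[X_t=y,T_{B(x_0,R)\cap\mathcal S_\infty}>t]/\mu_y\ge c_{khk1}(\vartheta)t^{-d/2}$ for $x_0\in\mathcal S_\infty\cap B(0,r_{\alpha,R})$, $x,y\in\mathcal S_\infty\cap B(x_0,(1-\vartheta)R)$, $c_{khk2}(\vartheta)R^2\le t\le R^2$, $\mu_y$ degree in $\mathcal S_\infty$). Sets: $A_N=(NA)\cap\mathbb{Z}^d$; $U_1=\mathcal S_\infty\setminus U_0$; $S$ = points of $U_1$ adjacent to $U_0$; $\sigma^\omega_\ell(x)=\frac{|B(x,2^\ell)\cap U_1|}{|B(x,2^\ell)\cap\mathcal S_\infty|}$, $\widetilde\sigma^\omega_\ell(x)=\frac{|B(x,4\cdot2^\ell)\cap U_1|}{|B(x,4\cdot2^\ell)\cap\mathcal S_\infty|}$; $\widetilde\alpha=\frac3{10}4^{-d}$; $\mathcal U^\omega_{\ell_*,N}$: $U_0\subseteq B(0,b_N)\cap\mathcal S_\infty$ with $\sigma^\omega_\ell(x)\le\frac12$ for all $x\in A_N\cap\mathcal S_\infty$, $\ell\le\ell_*$; $\mathcal S^\omega_{U_0,\epsilon,\chi}$: bounded $\Sigma\subseteq\mathcal S_\infty$ with $P^\omega_x[H_\Sigma<\tau_\epsilon]\ge\chi$ for all $x\in S$. *)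

theory Defs
  imports "HOL-Probability.Probability"
begin

definition l1norm :: "int ^ 'd \<Rightarrow> int" where
  "l1norm z = (\<Sum>i\<in>UNIV. \<bar>z $ i\<bar>)"

definition linfnorm :: "int ^ 'd \<Rightarrow> int" where
  "linfnorm z = Max (range (\<lambda>i. \<bar>z $ i\<bar>))"

definition toR :: "int ^ 'd \<Rightarrow> real ^ 'd" where
  "toR z = (\<chi> i. real_of_int (z $ i))"

definition eucl :: "int ^ 'd \<Rightarrow> real" where
  "eucl z = norm (toR z)"

text \<open>closed l-infinity ball B(x,r) in Z^d\<close>
definition ballinf :: "int ^ 'd \<Rightarrow> real \<Rightarrow> (int ^ 'd) set" where
  "ballinf x r = {z. real_of_int (linfnorm (z - x)) \<le> r}"

definition adj :: "int ^ 'd \<Rightarrow> int ^ 'd \<Rightarrow> bool" where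
  "adj x y \<longleftrightarrow> l1norm (x - y) = 1"

definition conn :: "(int ^ 'd \<Rightarrow> bool) \<Rightarrow> int ^ 'd \<Rightarrow> int ^ 'd \<Rightarrow> bool" where
  "conn \<omega> = (\<lambda>a b. \<omega> a \<and> \<omega> b \<and> adj a b)\<^sup>*\<^sup>*"

definition Sinf :: "(int ^ 'd \<Rightarrow> bool) \<Rightarrow> (int ^ 'd) set" where
  "Sinf \<omega> = {x. \<omega> x \<and> infinite {y. conn \<omega> x y}}"

definition nbrs :: "(int ^ 'd \<Rightarrow> bool) \<Rightarrow> int ^ 'd \<Rightarrow> (int ^ 'd) set" where
  "nbrs \<omega> x = {y. y \<in> Sinf \<omega> \<and> adj x y}"

definition deg :: "(int ^ 'd \<Rightarrow> bool) \<Rightarrow> int ^ 'd \<Rightarrow> real" where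
  "deg \<omega> y = real (card (nbrs \<omega> y))"

text \<open>Construction: i.i.d. pairs (U_n, E_n), U_n uniform on [0,1) selects a uniformly
  chosen neighbour in S_infinity, E_n ~ Exp(1) are the holding times.\<close>

definition walk_space :: "(nat \<Rightarrow> real \<times> real) measure" where
  "walk_space = PiM UNIV (\<lambda>_. uniform_measure lborel {0..<1} \<Otimes>\<^sub>M density lborel (exponential_density 1))"

definition nbr_enum :: "(int ^ 'd \<Rightarrow> bool) \<Rightarrow> int ^ 'd \<Rightarrow> nat \<Rightarrow> int ^ 'd" where
  "nbr_enum \<omega> x = (SOME f. bij_betw f {..<card (nbrs \<omega> x)} (nbrs \<omega> x))"

definition step :: "(int ^ 'd \<Rightarrow> bool) \<Rightarrow> int ^ 'd \<Rightarrow> real \<Rightarrow> int ^ 'd" where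
  "step \<omega> x u = (if nbrs \<omega> x = {} then x
     else nbr_enum \<omega> x (nat \<lfloor>u * real (card (nbrs \<omega> x))\<rfloor>))"

fun jchain :: "(int ^ 'd \<Rightarrow> bool) \<Rightarrow> int ^ 'd \<Rightarrow> (nat \<Rightarrow> real \<times> real) \<Rightarrow> nat \<Rightarrow> int ^ 'd" where
  "jchain \<omega> x \<xi> 0 = x"
| "jchain \<omega> x \<xi> (Suc n) = step \<omega> (jchain \<omega> x \<xi> n) (fst (\<xi> n))"

definition jtime :: "(nat \<Rightarrow> real \<times> real) \<Rightarrow> nat \<Rightarrow> real" where
  "jtime \<xi> n = (\<Sum>k<n. snd (\<xi> k))"

text \<open>X_t = Y_n for J_n <= t < J_(n+1)\<close>
definition wpath :: "(int ^ 'd \<Rightarrow> bool) \<Rightarrow> int ^ 'd \<Rightarrow> (nat \<Rightarrow> real \<times> real) \<Rightarrow> real \<Rightarrow> int ^ 'd" where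
  "wpath \<omega> x \<xi> t = jchain \<omega> x \<xi> (LEAST n. t < jtime \<xi> (Suc n))"

definition Pw :: "(int ^ 'd \<Rightarrow> bool) \<Rightarrow> int ^ 'd \<Rightarrow> ((real \<Rightarrow> int ^ 'd) \<Rightarrow> bool) \<Rightarrow> real" where
  "Pw \<omega> x E = measure walk_space {\<xi> \<in> space walk_space. E (wpath \<omega> x \<xi>)}"

text \<open>H_U, T_U, tau_r (inf of empty set = +infinity)\<close>
definition hitT :: "(real \<Rightarrow> 'a) \<Rightarrow> 'a set \<Rightarrow> ereal" where
  "hitT X U = Inf {ereal t | t. 0 \<le> t \<and> X t \<in> U}"

definition exitT :: "(real \<Rightarrow> 'a) \<Rightarrow> 'a set \<Rightarrow> ereal" where
  "exitT X U = Inf {ereal t | t. 0 \<le> t \<and> X t \<notin> U}"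

definition tauT :: "real \<Rightarrow> (real \<Rightarrow> int ^ 'd) \<Rightarrow> ereal" where
  "tauT r X = Inf {ereal t | t. 0 \<le> t \<and> real_of_int (linfnorm (X t - X 0)) \<ge> r}"

text \<open>r_{alpha,R} = exp(kappa_reg(alpha) (log R)^(1+Delta_S)); kr stands for kappa_reg(alpha)\<close>
definition r_reg :: "real \<Rightarrow> real \<Rightarrow> real \<Rightarrow> real" where
  "r_reg kr DS R = exp (kr * (ln R) powr (1 + DS))"

definition den_ok :: "(int ^ 'd \<Rightarrow> bool) \<Rightarrow> real \<Rightarrow> real \<Rightarrow> real \<Rightarrow> real \<Rightarrow> bool" where
  "den_ok \<omega> \<alpha> \<eta> kr DS \<longleftrightarrow> (\<exists>R0::real. \<forall>R\<ge>R0. \<forall>x \<in> Sinf \<omega> \<inter> ballinf 0 (r_reg kr DS R).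
     (1 - \<alpha>) * \<eta> \<le> real (card (Sinf \<omega> \<inter> ballinf x R)) / real (card (ballinf x R)) \<and>
     real (card (Sinf \<omega> \<inter> ballinf x R)) / real (card (ballinf x R)) \<le> (1 + \<alpha>) * \<eta>)"

definition hk_ok :: "(int ^ 'd \<Rightarrow> bool) \<Rightarrow> real \<Rightarrow> real \<Rightarrow> real \<Rightarrow> real \<Rightarrow> real \<Rightarrow> real \<Rightarrow> bool" where
  "hk_ok \<omega> kr DS c1 c2 c3 c4 \<longleftrightarrow> (\<exists>R0::real. \<forall>R\<ge>R0. \<forall>x \<in> Sinf \<omega> \<inter> ballinf 0 (2 * r_reg kr DS R).
     \<forall>y \<in> Sinf \<omega>. \<forall>t. max R (real_of_int (l1norm (x - y)) powr (3/2)) \<le> t \<longrightarrow>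
       c1 * t powr (- real CARD('d) / 2) * exp (- c2 * real_of_int (l1norm (x - y)) ^ 2 / t)
         \<le> Pw \<omega> x (\<lambda>X. X t = y) / deg \<omega> y \<and>
       Pw \<omega> x (\<lambda>X. X t = y) / deg \<omega> y
         \<le> c3 * t powr (- real CARD('d) / 2) * exp (- c4 * real_of_int (l1norm (x - y)) ^ 2 / t))"

definition khk_ok :: "(int ^ 'd \<Rightarrow> bool) \<Rightarrow> real \<Rightarrow> real \<Rightarrow> real \<Rightarrow> real \<Rightarrow> real \<Rightarrow> bool" where
  "khk_ok \<omega> \<theta> kr DS ck1 ck2 \<longleftrightarrow> (\<exists>R0::nat. \<forall>R::nat\<ge>R0.
     \<forall>x0 \<in> Sinf \<omega> \<inter> ballinf 0 (r_reg kr DS (real R)).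
     \<forall>x \<in> Sinf \<omega> \<inter> ballinf x0 ((1 - \<theta>) * real R).
     \<forall>y \<in> Sinf \<omega> \<inter> ballinf x0 ((1 - \<theta>) * real R).
     \<forall>t. ck2 * real R ^ 2 \<le> t \<and> t \<le> real R ^ 2 \<longrightarrow>
       Pw \<omega> x (\<lambda>X. X t = y \<and> exitT X (ballinf x0 (real R) \<inter> Sinf \<omega>) > ereal t) / deg \<omega> y
         \<ge> ck1 * t powr (- real CARD('d) / 2))"

definition Omega_reg :: "real \<Rightarrow> real \<Rightarrow> real \<Rightarrow> real \<Rightarrow> real \<Rightarrow> real \<Rightarrow> real \<Rightarrow> real
   \<Rightarrow> real \<Rightarrow> real \<Rightarrow> real \<Rightarrow> (int ^ 'd \<Rightarrow> bool) set" where
  "Omega_reg \<alpha> \<theta> \<eta> kr DS c1 c2 c3 c4 ck1 ck2 =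
     {\<omega>. Sinf \<omega> \<noteq> {} \<and>
          (\<forall>x\<in>Sinf \<omega>. \<forall>y\<in>Sinf \<omega>. (\<lambda>a b. a \<in> Sinf \<omega> \<and> b \<in> Sinf \<omega> \<and> adj a b)\<^sup>*\<^sup>* x y) \<and>
          den_ok \<omega> \<alpha> \<eta> kr DS \<and> hk_ok \<omega> kr DS c1 c2 c3 c4 \<and> khk_ok \<omega> \<theta> kr DS ck1 ck2}"

definition A_N :: "(real ^ 'd) set \<Rightarrow> nat \<Rightarrow> (int ^ 'd) set" where
  "A_N A N = {z. toR z \<in> (\<lambda>a. real N *\<^sub>R a) ` A}"

definition U1 :: "(int ^ 'd \<Rightarrow> bool) \<Rightarrow> (int ^ 'd) set \<Rightarrow> (int ^ 'd) set" where
  "U1 \<omega> U0 = Sinf \<omega> - U0"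

definition Sbd :: "(int ^ 'd \<Rightarrow> bool) \<Rightarrow> (int ^ 'd) set \<Rightarrow> (int ^ 'd) set" where
  "Sbd \<omega> U0 = {x \<in> U1 \<omega> U0. \<exists>z\<in>U0. adj x z}"

definition sigma :: "(int ^ 'd \<Rightarrow> bool) \<Rightarrow> (int ^ 'd) set \<Rightarrow> nat \<Rightarrow> int ^ 'd \<Rightarrow> real" where
  "sigma \<omega> U0 l x = real (card (ballinf x (2 ^ l) \<inter> U1 \<omega> U0)) / real (card (ballinf x (2 ^ l) \<inter> Sinf \<omega>))"

definition sigmat :: "(int ^ 'd \<Rightarrow> bool) \<Rightarrow> (int ^ 'd) set \<Rightarrow> nat \<Rightarrow> int ^ 'd \<Rightarrow> real" where
  "sigmat \<omega> U0 l x = real (card (ballinf x (4 * 2 ^ l) \<inter> U1 \<omega> U0)) / real (card (ballinf x (4 * 2 ^ l) \<inter> Sinf \<omega>))"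

definition alphat :: "'d itself \<Rightarrow> real" where
  "alphat _ = 3 / 10 * (1 / 4 ^ CARD('d))"

definition Ucal :: "(int ^ 'd \<Rightarrow> bool) \<Rightarrow> (real ^ 'd) set \<Rightarrow> (nat \<Rightarrow> real) \<Rightarrow> nat \<Rightarrow> nat \<Rightarrow> (int ^ 'd) set set" where
  "Ucal \<omega> A b ls N = {U0. U0 \<subseteq> ballinf 0 (b N) \<inter> Sinf \<omega> \<and>
      (\<forall>x \<in> A_N A N \<inter> Sinf \<omega>. \<forall>l\<le>ls. sigma \<omega> U0 l x \<le> 1/2)}"

definition Scal :: "(int ^ 'd \<Rightarrow> bool) \<Rightarrow> (int ^ 'd) set \<Rightarrow> nat \<Rightarrow> real \<Rightarrow> (int ^ 'd) set set" where
  "Scal \<omega> U0 \<epsilon> ch = {Sg. finite Sg \<and> Sg \<subseteq> Sinf \<omega> \<and>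
      (\<forall>x \<in> Sbd \<omega> U0. Pw \<omega> x (\<lambda>X. hitT X Sg < tauT (real \<epsilon>) X) \<ge> ch)}"

end

theory Submission
  imports Defs
begin

text \<open>
  Put R = 9 * 2^(l-1), so that (1 - 1/9) R = 4 * 2^l and R + 2^l/4 <= 5 * 2^l. In the box
  B(x0, 4 * 2^l) the cluster has density at least (2/3) eta, and by the bounds on sigma~ the phase
  (U0 or U1) not containing y has at least alpha~ (2/3) eta R^d points there. Summing the killed
  heat-kernel lower bound c R^-d over them, with probability at least alpha~ (2/3) eta c the walk
  from y is in the opposite phase at time R^2 without having left B(x0, R), so its jump chain has
  visited the interface S inside B(x0, R). By the strong Markov property at the first such visit,
  Sigma is then hit with probability at least chi before the walk moves by epsilon <= 2^l/4, hence
  before it leaves B(x0, 5 * 2^l); so c5(chi) = chi alpha~ (2/3) eta c works. Hitting and exit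
  events of the continuous-time walk are decided by its jump chain, and the strong Markov property
  is proved for the jump chain from the product structure of the driving i.i.d. sequence.
\<close>

section \<open>The probability space of the walk\<close>

lemma (in finite_measure) measure_mono_AE:
  assumes "AE x in M. x \<in> A \<longrightarrow> x \<in> B" and "B \<in> sets M"
  shows "measure M A \<le> measure M B"
  unfolding measure_def using assms
  by (intro enn2real_mono emeasure_mono_AE) (auto simp: less_top[symmetric])

lemma (in finite_measure) sum_measure_le_AE:
  assumes "finite F" and "\<And>a. a \<in> F \<Longrightarrow> AE x in M. x \<in> A a \<longrightarrow> x \<in> E"
    and "disjoint_family_on A F" and "E \<in> sets M"
  shows "(\<Sum>a\<in>F. measure M (A a)) \<le> measure M E"
proof -
  let ?F = "{a \<in> F. A a \<in> sets M}"
  have "(\<Sum>a\<in>F. measure M (A a)) = (\<Sum>a\<in>?F. measure M (A a))"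
    using assms(1) by (intro sum.mono_neutral_right) (auto simp: measure_notin_sets)
  also have "\<dots> = measure M (\<Union>a\<in>?F. A a)"
    using assms(1,3) by (intro finite_measure_finite_Union[symmetric])
      (auto simp: disjoint_family_on_def)
  also have "\<dots> \<le> measure M E"
  proof (rule measure_mono_AE[OF _ assms(4)])
    have "AE x in M. \<forall>a\<in>F. x \<in> A a \<longrightarrow> x \<in> E"
      using assms(1,2) by (rule AE_finite_allI)
    then show "AE x in M. x \<in> (\<Union>a\<in>?F. A a) \<longrightarrow> x \<in> E"
      by eventually_elim auto
  qed
  finally show ?thesis .
qed

definition step_measure :: "(real \<times> real) measure" where
  "step_measure = uniform_measure lborel {0..<1} \<Otimes>\<^sub>M density lborel (exponential_density 1)"

lemma prob_space_step_measure: "prob_space step_measure"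
  unfolding step_measure_def
  by (intro prob_space_pair prob_space_uniform_measure prob_space_exponential_density) auto

lemma walk_space_eq_PiM: "walk_space = PiM UNIV (\<lambda>_. step_measure)"
  unfolding walk_space_def step_measure_def ..

interpretation steps: sequence_space step_measure
  by (simp add: sequence_space_def product_prob_space_def product_prob_space_axioms_def
      prob_space_step_measure product_sigma_finite_def prob_space_imp_sigma_finite)

interpretation walk: prob_space walk_space
  unfolding walk_space_eq_PiM by (rule steps.prob_space_axioms)

lemma space_step_measure: "space step_measure = UNIV"
  unfolding step_measure_def by (simp add: space_pair_measure)

lemma space_walk_space: "space walk_space = UNIV"
  unfolding walk_space_eq_PiM by (simp add: space_PiM space_step_measure)

lemma measurable_walk_coordinate [measurable]:
  "(\<lambda>\<xi>. \<xi> n) \<in> measurable walk_space step_measure"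
  unfolding walk_space_eq_PiM by measurable

lemma measurable_walk_uniform [measurable]: "(\<lambda>\<xi>. fst (\<xi> n)) \<in> borel_measurable walk_space"
proof -
  have "fst \<in> borel_measurable step_measure" unfolding step_measure_def by measurable
  then show ?thesis using measurable_walk_coordinate by (rule measurable_compose_rev)
qed

lemma measurable_walk_holding [measurable]: "(\<lambda>\<xi>. snd (\<xi> n)) \<in> borel_measurable walk_space"
proof -
  have "snd \<in> borel_measurable step_measure" unfolding step_measure_def by measurable
  then show ?thesis using measurable_walk_coordinate by (rule measurable_compose_rev)
qed

lemma measurable_jtime [measurable]: "(\<lambda>\<xi>. jtime \<xi> n) \<in> borel_measurable walk_space"
  unfolding jtime_def by measurable

lemma measurable_step: "step \<omega> x \<in> measurable borel (count_space UNIV)"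
proof -
  have "(\<lambda>u::real. nat \<lfloor>u * real (card (nbrs \<omega> x))\<rfloor>) \<in> measurable borel (count_space UNIV)"
    by measurable
  then have "(\<lambda>u. nbr_enum \<omega> x (nat \<lfloor>u * real (card (nbrs \<omega> x))\<rfloor>))
      \<in> measurable borel (count_space UNIV)"
    by (rule measurable_compose) simp
  then show ?thesis unfolding step_def[abs_def] by (cases "nbrs \<omega> x = {}") auto
qed

lemma measurable_jchain [measurable]:
  "(\<lambda>\<xi>. jchain \<omega> x \<xi> n) \<in> measurable walk_space (count_space UNIV)"
proof (induction n)
  case (Suc n)
  have "(\<lambda>\<xi>. step \<omega> z (fst (\<xi> n))) \<in> measurable walk_space (count_space UNIV)" for z
    using measurable_step measurable_walk_uniform by (rule measurable_compose_rev)
  then show ?case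
    using measurable_compose_countable[where f="\<lambda>z \<xi>. step \<omega> z (fst (\<xi> n))", OF _ Suc]
    by simp
qed simp

lemma measurable_wpath [measurable]:
  "(\<lambda>\<xi>. wpath \<omega> x \<xi> t) \<in> measurable walk_space (count_space UNIV)"
proof -
  have "(\<lambda>\<xi>. LEAST n. t < jtime \<xi> (Suc n)) \<in> measurable walk_space (count_space UNIV)"
    by measurable
  then show ?thesis unfolding wpath_def
    using measurable_compose_countable[where f="\<lambda>n \<xi>. jchain \<omega> x \<xi> n"] by simp
qed

definition valid_sample :: "(nat \<Rightarrow> real \<times> real) \<Rightarrow> bool" where
  "valid_sample \<xi> \<longleftrightarrow> (\<forall>k. 0 < snd (\<xi> k) \<and> 0 \<le> fst (\<xi> k) \<and> fst (\<xi> k) < 1)"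

lemma AE_valid_step: "AE p in step_measure. 0 < snd p \<and> 0 \<le> fst p \<and> fst p < 1"
proof -
  let ?U = "uniform_measure lborel {0..<1::real}"
  let ?D = "density lborel (\<lambda>x. ennreal (exponential_density 1 x))"
  interpret U: prob_space ?U by (intro prob_space_uniform_measure) auto
  interpret D: prob_space ?D by (rule prob_space_exponential_density) simp
  interpret P: pair_sigma_finite ?U ?D ..
  have density_meas: "(\<lambda>x. ennreal (exponential_density 1 x)) \<in> borel_measurable lborel"
    unfolding exponential_density_def by measurable
  have D_pos: "AE y in ?D. 0 < y"
    unfolding AE_density[OF density_meas] using AE_lborel_singleton[of 0]
    by eventually_elim (auto simp: exponential_density_def split: if_splits)
  have U_range: "AE x in ?U. 0 \<le> x \<and> x < 1"
    by (rule AE_uniform_measureI) auto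
  have "measurable (?U \<Otimes>\<^sub>M ?D) ?D = measurable (?U \<Otimes>\<^sub>M ?D) borel"
    by (rule measurable_cong_sets) auto
  then have snd_meas: "snd \<in> borel_measurable (?U \<Otimes>\<^sub>M ?D)" using measurable_snd by metis
  have "measurable (?U \<Otimes>\<^sub>M ?D) ?U = measurable (?U \<Otimes>\<^sub>M ?D) borel"
    by (rule measurable_cong_sets) auto
  then have fst_meas: "fst \<in> borel_measurable (?U \<Otimes>\<^sub>M ?D)" using measurable_fst by metis
  have "{p \<in> space (?U \<Otimes>\<^sub>M ?D). 0 < snd p \<and> 0 \<le> fst p \<and> fst p < 1} \<in> sets (?U \<Otimes>\<^sub>M ?D)"
    using fst_meas snd_meas by measurable
  then have "AE p in ?U \<Otimes>\<^sub>M ?D. 0 < snd p \<and> 0 \<le> fst p \<and> fst p < 1"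
  proof (rule P.AE_pair_measure)
    show "AE x in ?U. AE y in ?D. 0 < snd (x, y) \<and> 0 \<le> fst (x, y) \<and> fst (x, y) < 1"
      using U_range by eventually_elim (use D_pos in \<open>auto elim: AE_mp\<close>)
  qed
  then show ?thesis unfolding step_measure_def .
qed

lemma AE_valid_sample: "AE \<xi> in walk_space. valid_sample \<xi>"
proof -
  have "AE \<xi> in walk_space. 0 < snd (\<xi> k) \<and> 0 \<le> fst (\<xi> k) \<and> fst (\<xi> k) < 1" for k
    unfolding walk_space_eq_PiM
    by (rule AE_PiM_component[OF prob_space_step_measure UNIV_I AE_valid_step])
  then show ?thesis unfolding valid_sample_def by (simp add: AE_all_countable)
qed

lemma Pw_le_measure:
  assumes "AE \<xi> in walk_space. P (wpath \<omega> x \<xi>) \<longrightarrow> \<xi> \<in> E" and "E \<in> sets walk_space"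
  shows "Pw \<omega> x P \<le> measure walk_space E"
  unfolding Pw_def using assms by (intro walk.measure_mono_AE) auto

section \<open>Paths of the walk\<close>

definition positive_holding :: "(nat \<Rightarrow> real \<times> real) \<Rightarrow> bool" where
  "positive_holding \<xi> \<longleftrightarrow> (\<forall>k. 0 < snd (\<xi> k))"

lemma valid_sample_positive_holding: "valid_sample \<xi> \<Longrightarrow> positive_holding \<xi>"
  by (simp add: valid_sample_def positive_holding_def)

lemma jtime_0 [simp]: "jtime \<xi> 0 = 0"
  by (simp add: jtime_def)

lemma jtime_Suc: "jtime \<xi> (Suc n) = jtime \<xi> n + snd (\<xi> n)"
  by (simp add: jtime_def)

lemma strict_mono_jtime: "positive_holding \<xi> \<Longrightarrow> strict_mono (jtime \<xi>)"
  by (simp add: strict_mono_Suc_iff jtime_Suc positive_holding_def)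

lemma jtime_nonneg: "positive_holding \<xi> \<Longrightarrow> 0 \<le> jtime \<xi> n"
  using strict_mono_less_eq[OF strict_mono_jtime, of \<xi> 0 n] by simp

lemma wpath_jtime:
  assumes "positive_holding \<xi>"
  shows "wpath \<omega> x \<xi> (jtime \<xi> k) = jchain \<omega> x \<xi> k"
proof -
  have "(LEAST n. jtime \<xi> k < jtime \<xi> (Suc n)) = k"
    by (rule Least_equality) (simp_all add: strict_mono_less[OF strict_mono_jtime[OF assms]])
  then show ?thesis by (simp add: wpath_def)
qed

lemma wpath_0: "positive_holding \<xi> \<Longrightarrow> wpath \<omega> x \<xi> 0 = x"
  using wpath_jtime[of \<xi> \<omega> x 0] by simp

lemma wpath_eq_jchain:
  assumes "0 \<le> t"
  obtains n where "wpath \<omega> x \<xi> t = jchain \<omega> x \<xi> n" and "\<forall>k\<le>n. jtime \<xi> k \<le> t"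
proof (cases "\<exists>n. t < jtime \<xi> (Suc n)")
  case True
  define n where "n = (LEAST n. t < jtime \<xi> (Suc n))"
  have "jtime \<xi> k \<le> t" if "k \<le> n" for k
  proof (cases k)
    case (Suc m)
    then have "m < n" using that by simp
    then have "\<not> t < jtime \<xi> (Suc m)" unfolding n_def by (rule not_less_Least)
    then show ?thesis using Suc by simp
  qed (use assms in simp)
  then show ?thesis by (intro that[of n]) (simp_all add: wpath_def n_def)
next
  case False
  then have "jtime \<xi> k \<le> t" for k
    using assms by (cases k) (simp_all add: not_less)
  then show ?thesis by (intro that) (simp_all add: wpath_def)
qed

lemma wpath_right_constant:
  "\<exists>\<delta>>0. \<forall>s. t \<le> s \<and> s < t + \<delta> \<longrightarrow> wpath \<omega> x \<xi> s = wpath \<omega> x \<xi> t"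
proof (cases "\<exists>n. t < jtime \<xi> (Suc n)")
  case True
  define n0 where "n0 = (LEAST n. t < jtime \<xi> (Suc n))"
  have n0: "t < jtime \<xi> (Suc n0)" unfolding n0_def using True by (rule LeastI_ex)
  have before_n0: "m < n0 \<Longrightarrow> \<not> t < jtime \<xi> (Suc m)" for m
    unfolding n0_def by (rule not_less_Least)
  show ?thesis
  proof (intro exI[of _ "jtime \<xi> (Suc n0) - t"] conjI allI impI)
    show "0 < jtime \<xi> (Suc n0) - t" using n0 by simp
    fix s assume s: "t \<le> s \<and> s < t + (jtime \<xi> (Suc n0) - t)"
    have "(LEAST n. s < jtime \<xi> (Suc n)) = n0"
    proof (rule Least_equality)
      show "s < jtime \<xi> (Suc n0)" using s by simp
      fix m assume "s < jtime \<xi> (Suc m)"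
      then show "n0 \<le> m" using before_n0[of m] s by force
    qed
    then show "wpath \<omega> x \<xi> s = wpath \<omega> x \<xi> t" unfolding wpath_def n0_def by simp
  qed
next
  case False
  show ?thesis
  proof (intro exI[of _ 1] conjI allI impI)
    fix s assume "t \<le> s \<and> s < t + 1"
    then have "\<forall>n. \<not> s < jtime \<xi> (Suc n)" using False by (meson le_less_trans)
    then have "(\<lambda>n. s < jtime \<xi> (Suc n)) = (\<lambda>n. t < jtime \<xi> (Suc n))" using False by auto
    then show "wpath \<omega> x \<xi> s = wpath \<omega> x \<xi> t" unfolding wpath_def by simp
  qed simp
qed

lemma Inf_less_ereal_iff_rat:
  fixes X :: "real \<Rightarrow> 'a"
  assumes right_constant: "\<And>t. \<exists>\<delta>>0. \<forall>s. t \<le> s \<and> s < t + \<delta> \<longrightarrow> X s = X t"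
  shows "Inf {ereal t | t. 0 \<le> t \<and> P (X t)} < ereal r \<longleftrightarrow>
         (\<exists>p::rat. 0 \<le> p \<and> real_of_rat p < r \<and> P (X (real_of_rat p)))"
proof
  assume "Inf {ereal t | t. 0 \<le> t \<and> P (X t)} < ereal r"
  then obtain t where t: "0 \<le> t" "P (X t)" "t < r" by (auto simp: Inf_less_iff)
  obtain \<delta> where \<delta>: "\<delta> > 0" "\<And>s. t \<le> s \<and> s < t + \<delta> \<Longrightarrow> X s = X t"
    using right_constant[of t] by blast
  have "t < min (t + \<delta>) r" using \<delta>(1) t(3) by simp
  then obtain q where q: "q \<in> \<rat>" "t < q" "q < min (t + \<delta>) r"
    using Rats_dense_in_real by blast
  then obtain p where p: "q = real_of_rat p" using Rats_cases by blast
  have "X q = X t" using \<delta>(2)[of q] q(2,3) by simp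
  show "\<exists>p::rat. 0 \<le> p \<and> real_of_rat p < r \<and> P (X (real_of_rat p))"
  proof (intro exI[of _ p] conjI)
    show "0 \<le> p" using q(2) t(1) p by (metis of_rat_less_eq of_rat_0 less_imp_le order_le_less_trans)
    show "real_of_rat p < r" using q(3) p by simp
    show "P (X (real_of_rat p))" using \<open>X q = X t\<close> t(2) p by simp
  qed
next
  assume "\<exists>p::rat. 0 \<le> p \<and> real_of_rat p < r \<and> P (X (real_of_rat p))"
  then obtain p :: rat where p: "0 \<le> p" "real_of_rat p < r" "P (X (real_of_rat p))" by blast
  have "Inf {ereal t | t. 0 \<le> t \<and> P (X t)} \<le> ereal (real_of_rat p)"
    by (rule Inf_lower) (use p(1,3) in \<open>auto simp: zero_le_of_rat_iff\<close>)
  also have "\<dots> < ereal r" using p by simp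
  finally show "Inf {ereal t | t. 0 \<le> t \<and> P (X t)} < ereal r" .
qed

lemma ereal_less_iff_rat:
  "(a::ereal) < b \<longleftrightarrow> (\<exists>q::rat. a < ereal (real_of_rat q) \<and> \<not> b < ereal (real_of_rat q))"
proof
  assume "a < b"
  then obtain z z' where z: "a < ereal z'" "ereal z' < ereal z" "ereal z < b"
    using ereal_dense2 by meson
  then obtain q where q: "q \<in> \<rat>" "z' < q" "q < z" using Rats_dense_in_real by auto
  then obtain p where "q = real_of_rat p" using Rats_cases by blast
  moreover have "a < ereal q" using less_trans[OF z(1)] q(2) by simp
  moreover have "\<not> b < ereal q" using less_trans[OF _ z(3), of "ereal q"] q(3) by auto
  ultimately show "\<exists>q::rat. a < ereal (real_of_rat q) \<and> \<not> b < ereal (real_of_rat q)" by blast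
next
  assume "\<exists>q::rat. a < ereal (real_of_rat q) \<and> \<not> b < ereal (real_of_rat q)"
  then show "a < b" by (auto simp: not_less intro: less_le_trans)
qed

text \<open>Paths are right-continuous step functions, so both infima can be tested at rational times.\<close>

lemma sets_hit_before_exit [measurable]:
  "{\<xi> \<in> space walk_space. hitT (wpath \<omega> x \<xi>) Z < exitT (wpath \<omega> x \<xi>) B} \<in> sets walk_space"
proof -
  have rational_times: "hitT (wpath \<omega> x \<xi>) Z < exitT (wpath \<omega> x \<xi>) B \<longleftrightarrow>
      (\<exists>q::rat. (\<exists>p::rat. 0 \<le> p \<and> real_of_rat p < real_of_rat q \<and> wpath \<omega> x \<xi> (real_of_rat p) \<in> Z)
        \<and> \<not> (\<exists>p::rat. 0 \<le> p \<and> real_of_rat p < real_of_rat q \<and> wpath \<omega> x \<xi> (real_of_rat p) \<notin> B))"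
    for \<xi>
    unfolding hitT_def exitT_def
    by (subst ereal_less_iff_rat, subst (1 2) Inf_less_ereal_iff_rat[OF wpath_right_constant]) simp
  show ?thesis unfolding rational_times by measurable
qed

lemma wpath_inside_before_exit:
  assumes "positive_holding \<xi>" and "0 \<le> t" and "ereal t < exitT (wpath \<omega> x \<xi>) B"
  obtains n where "wpath \<omega> x \<xi> t = jchain \<omega> x \<xi> n" and "\<forall>k\<le>n. jchain \<omega> x \<xi> k \<in> B"
proof -
  obtain n where n: "wpath \<omega> x \<xi> t = jchain \<omega> x \<xi> n" "\<forall>k\<le>n. jtime \<xi> k \<le> t"
    using wpath_eq_jchain[OF assms(2)] by blast
  have "jchain \<omega> x \<xi> k \<in> B" if "k \<le> n" for k
  proof (rule ccontr)
    assume "jchain \<omega> x \<xi> k \<notin> B"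
    then have "exitT (wpath \<omega> x \<xi>) B \<le> ereal (jtime \<xi> k)"
      unfolding exitT_def using assms(1)
      by (intro Inf_lower) (auto simp: wpath_jtime jtime_nonneg)
    also have "\<dots> \<le> ereal t" using n(2) that by simp
    finally show False using assms(3) by simp
  qed
  then show ?thesis using n(1) that by blast
qed

lemma hit_before_exit_iff:
  assumes "positive_holding \<xi>"
  shows "hitT (wpath \<omega> x \<xi>) Z < exitT (wpath \<omega> x \<xi>) B \<longleftrightarrow>
    (\<exists>n. jchain \<omega> x \<xi> n \<in> Z \<and> (\<forall>k\<le>n. jchain \<omega> x \<xi> k \<in> B))"
proof
  assume "hitT (wpath \<omega> x \<xi>) Z < exitT (wpath \<omega> x \<xi>) B"
  then obtain t where t: "0 \<le> t" "wpath \<omega> x \<xi> t \<in> Z" "ereal t < exitT (wpath \<omega> x \<xi>) B"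
    unfolding hitT_def by (auto simp: Inf_less_iff)
  then obtain n where "wpath \<omega> x \<xi> t = jchain \<omega> x \<xi> n" "\<forall>k\<le>n. jchain \<omega> x \<xi> k \<in> B"
    using wpath_inside_before_exit[OF assms] by blast
  then show "\<exists>n. jchain \<omega> x \<xi> n \<in> Z \<and> (\<forall>k\<le>n. jchain \<omega> x \<xi> k \<in> B)"
    using t(2) by auto
next
  assume "\<exists>n. jchain \<omega> x \<xi> n \<in> Z \<and> (\<forall>k\<le>n. jchain \<omega> x \<xi> k \<in> B)"
  then obtain n where n: "jchain \<omega> x \<xi> n \<in> Z" "\<forall>k\<le>n. jchain \<omega> x \<xi> k \<in> B" by blast
  have "hitT (wpath \<omega> x \<xi>) Z \<le> ereal (jtime \<xi> n)"
    unfolding hitT_def using n(1) assms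
    by (intro Inf_lower) (auto simp: wpath_jtime jtime_nonneg)
  also have "\<dots> < ereal (jtime \<xi> (Suc n))"
    using strict_mono_jtime[OF assms] by (simp add: strict_mono_def)
  also have "\<dots> \<le> exitT (wpath \<omega> x \<xi>) B"
    unfolding exitT_def
  proof (rule Inf_greatest)
    fix e assume "e \<in> {ereal t | t. 0 \<le> t \<and> wpath \<omega> x \<xi> t \<notin> B}"
    then obtain t where t: "e = ereal t" "0 \<le> t" "wpath \<omega> x \<xi> t \<notin> B" by blast
    obtain m where m: "wpath \<omega> x \<xi> t = jchain \<omega> x \<xi> m" "\<forall>k\<le>m. jtime \<xi> k \<le> t"
      using wpath_eq_jchain[OF t(2)] by blast
    have "Suc n \<le> m" using m(1) t(3) n(2) by (metis not_less_eq_eq)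
    then show "ereal (jtime \<xi> (Suc n)) \<le> e" using t(1) m(2) by simp
  qed
  finally show "hitT (wpath \<omega> x \<xi>) Z < exitT (wpath \<omega> x \<xi>) B" .
qed

lemma tauT_wpath_eq_exitT:
  "positive_holding \<xi> \<Longrightarrow>
    tauT r (wpath \<omega> x \<xi>) = exitT (wpath \<omega> x \<xi>) {w. real_of_int (linfnorm (w - x)) < r}"
  unfolding tauT_def exitT_def by (simp add: wpath_0 not_less)

section \<open>Lattice geometry and the jump chain\<close>

lemma abs_le_linfnorm: "\<bar>z $ i\<bar> \<le> linfnorm z"
  unfolding linfnorm_def by (rule Max_ge) auto

lemma linfnorm_le_iff: "linfnorm z \<le> r \<longleftrightarrow> (\<forall>i. \<bar>z $ i\<bar> \<le> r)"
  unfolding linfnorm_def by (subst Max_le_iff) auto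

lemma linfnorm_triangle: "linfnorm (a + b) \<le> linfnorm a + linfnorm b"
proof -
  have "\<bar>(a + b) $ i\<bar> \<le> linfnorm a + linfnorm b" for i
    using abs_le_linfnorm[of a i] abs_le_linfnorm[of b i] abs_triangle_ineq[of "a $ i" "b $ i"]
    by simp
  then show ?thesis by (simp add: linfnorm_le_iff)
qed

lemma linfnorm_minus_commute: "linfnorm (a - b) = linfnorm (b - a)"
  unfolding linfnorm_def by (simp add: abs_minus_commute)

lemma linfnorm_le_eucl: "real_of_int (linfnorm z) \<le> eucl z"
proof -
  have "linfnorm z \<in> range (\<lambda>i. \<bar>z $ i\<bar>)" unfolding linfnorm_def by (rule Max_in) auto
  then obtain i where "linfnorm z = \<bar>z $ i\<bar>" by blast
  moreover have "\<bar>toR z $ i\<bar> \<le> norm (toR z)" by (rule component_le_norm_cart)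
  ultimately show ?thesis by (simp add: eucl_def toR_def)
qed

lemma ballinf_subset_image_PiE:
  "ballinf x r \<subseteq> (\<lambda>f. x + vec_lambda f) ` (PiE UNIV (\<lambda>_. {-\<lceil>r\<rceil>..\<lceil>r\<rceil>}))"
proof
  fix z assume z: "z \<in> ballinf x r"
  have "\<bar>(z - x) $ i\<bar> \<le> \<lceil>r\<rceil>" for i
  proof -
    have "real_of_int \<bar>(z - x) $ i\<bar> \<le> r"
      using z abs_le_linfnorm[of "z - x" i] by (auto simp: ballinf_def)
    then show ?thesis by linarith
  qed
  then have "-\<lceil>r\<rceil> \<le> (z - x) $ i \<and> (z - x) $ i \<le> \<lceil>r\<rceil>" for i
    unfolding abs_le_iff by (meson minus_le_iff)
  then have "(\<lambda>i. (z - x) $ i) \<in> PiE UNIV (\<lambda>_. {-\<lceil>r\<rceil>..\<lceil>r\<rceil>})"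
    by (simp add: PiE_iff)
  moreover have "z = x + vec_lambda (\<lambda>i. (z - x) $ i)" by (simp add: vec_eq_iff)
  ultimately show "z \<in> (\<lambda>f. x + vec_lambda f) ` (PiE UNIV (\<lambda>_. {-\<lceil>r\<rceil>..\<lceil>r\<rceil>}))" by blast
qed

lemma finite_ballinf: "finite (ballinf x r)"
  by (rule finite_subset[OF ballinf_subset_image_PiE]) (auto intro!: finite_PiE)

lemma card_ballinf_ge:
  fixes x :: "int ^ 'd"
  shows "real (2 * M + 1) ^ CARD('d) \<le> real (card (ballinf x (real M)))"
proof -
  let ?P = "PiE (UNIV :: 'd set) (\<lambda>_. {-int M..int M})"
  have "inj_on (\<lambda>f. x + vec_lambda f) ?P"
  proof (rule inj_onI)
    fix f g assume "f \<in> ?P" "g \<in> ?P" "x + vec_lambda f = x + vec_lambda g"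
    then show "f = g" by (metis add_left_cancel vec_lambda_beta PiE_ext UNIV_I)
  qed
  moreover have "(\<lambda>f. x + vec_lambda f) ` ?P \<subseteq> ballinf x (real M)"
  proof
    fix z assume "z \<in> (\<lambda>f. x + vec_lambda f) ` ?P"
    then obtain f where f: "f \<in> ?P" "z = x + vec_lambda f" by blast
    then have "\<bar>(z - x) $ i\<bar> \<le> int M" for i
      by (auto simp: PiE_iff abs_le_iff minus_le_iff)
    then have "linfnorm (z - x) \<le> int M" by (simp add: linfnorm_le_iff)
    then show "z \<in> ballinf x (real M)" by (simp add: ballinf_def)
  qed
  ultimately have "card ?P \<le> card (ballinf x (real M))"
    by (metis card_image card_mono finite_ballinf)
  moreover have "card ?P = (2 * M + 1) ^ CARD('d)"
  proof -
    have "nat (2 * int M + 1) = Suc (2 * M)" by arith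
    then show ?thesis by (simp add: card_PiE)
  qed
  ultimately show ?thesis by (metis of_nat_le_iff of_nat_power)
qed

lemma ballinf_mono: "r \<le> s \<Longrightarrow> ballinf x r \<subseteq> ballinf x s"
  by (auto simp: ballinf_def)

lemma ballinf_triangle:
  assumes "z \<in> ballinf x r" and "real_of_int (linfnorm (w - z)) < e"
  shows "w \<in> ballinf x (r + e)"
  using assms linfnorm_triangle[of "w - z" "z - x"] by (simp add: ballinf_def)

lemma adj_commute: "adj x y = adj y x"
proof -
  have "l1norm (x - y) = l1norm (y - x)"
    unfolding l1norm_def by (intro sum.cong) (auto simp: abs_minus_commute)
  then show ?thesis by (simp add: adj_def)
qed

lemma adj_imp_in_ballinf: "adj x y \<Longrightarrow> y \<in> ballinf x 1"
proof -
  assume "adj x y"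
  then have "(\<Sum>i\<in>UNIV. \<bar>(x - y) $ i\<bar>) = 1" by (simp add: adj_def l1norm_def)
  then have "\<bar>(x - y) $ i\<bar> \<le> 1" for i
    using member_le_sum[of i UNIV "\<lambda>i. \<bar>(x - y) $ i\<bar>"] by simp
  then have "linfnorm (x - y) \<le> 1" by (simp add: linfnorm_le_iff)
  then show ?thesis by (simp add: ballinf_def linfnorm_minus_commute)
qed

lemma finite_nbrs: "finite (nbrs \<omega> x)"
  by (rule finite_subset[OF _ finite_ballinf[of x 1]]) (auto simp: nbrs_def adj_imp_in_ballinf)

lemma step_cases:
  assumes "0 \<le> u" "u < 1"
  shows "step \<omega> x u = x \<or> step \<omega> x u \<in> nbrs \<omega> x"
proof (cases "nbrs \<omega> x = {}")
  case False
  let ?c = "card (nbrs \<omega> x)"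
  have c: "0 < ?c" using False finite_nbrs card_gt_0_iff by blast
  have "\<exists>f. bij_betw f {..<?c} (nbrs \<omega> x)"
    using ex_bij_betw_nat_finite[OF finite_nbrs] by (auto simp: lessThan_atLeast0)
  then have "bij_betw (nbr_enum \<omega> x) {..<?c} (nbrs \<omega> x)"
    unfolding nbr_enum_def by (rule someI_ex)
  moreover have "nat \<lfloor>u * real ?c\<rfloor> < ?c" using assms c by (simp add: nat_less_iff floor_less_iff)
  ultimately have "nbr_enum \<omega> x (nat \<lfloor>u * real ?c\<rfloor>) \<in> nbrs \<omega> x"
    using bij_betwE by blast
  then show ?thesis using False by (simp add: step_def)
qed (simp add: step_def)

lemma jchain_in_Sinf:
  assumes "valid_sample \<xi>" "x \<in> Sinf \<omega>"
  shows "jchain \<omega> x \<xi> n \<in> Sinf \<omega>"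
proof (induction n)
  case (Suc n)
  then show ?case
    using assms(1) step_cases[of "fst (\<xi> n)" \<omega> "jchain \<omega> x \<xi> n"]
    by (auto simp: valid_sample_def nbrs_def)
qed (use assms in simp)

lemma jchain_Suc_cases:
  assumes "valid_sample \<xi>"
  shows "jchain \<omega> x \<xi> (Suc n) = jchain \<omega> x \<xi> n \<or> adj (jchain \<omega> x \<xi> n) (jchain \<omega> x \<xi> (Suc n))"
  using assms step_cases[of "fst (\<xi> n)" \<omega> "jchain \<omega> x \<xi> n"]
  by (auto simp: valid_sample_def nbrs_def)

lemma jchain_cong_prefix: "(\<forall>j<k. \<xi> j = \<xi>' j) \<Longrightarrow> jchain \<omega> x \<xi> k = jchain \<omega> x \<xi>' k"
  by (induction k) auto

lemma jchain_add: "jchain \<omega> x \<xi> (n + m) = jchain \<omega> (jchain \<omega> x \<xi> n) (\<lambda>k. \<xi> (n + k)) m"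
  by (induction m) auto

lemma r_reg_mono:
  assumes "0 \<le> kr" "0 \<le> DS" "1 \<le> a" "a \<le> b"
  shows "r_reg kr DS a \<le> r_reg kr DS b"
proof -
  have "ln a powr (1 + DS) \<le> ln b powr (1 + DS)" using assms by (intro powr_mono2) auto
  then show ?thesis unfolding r_reg_def using assms(1) by (simp add: mult_left_mono)
qed

section \<open>Events of the jump chain and the Markov property\<close>

definition chain_reaches ::
    "(int ^ 'd \<Rightarrow> bool) \<Rightarrow> int ^ 'd \<Rightarrow> (int ^ 'd) set \<Rightarrow> (int ^ 'd) set \<Rightarrow> (nat \<Rightarrow> real \<times> real) set"
  where "chain_reaches \<omega> x Z B =
    {\<xi> \<in> space walk_space. \<exists>n. jchain \<omega> x \<xi> n \<in> Z \<and> (\<forall>k\<le>n. jchain \<omega> x \<xi> k \<in> B)}"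

definition first_entry :: "(int ^ 'd \<Rightarrow> bool) \<Rightarrow> int ^ 'd \<Rightarrow> (int ^ 'd) set \<Rightarrow> (int ^ 'd) set
    \<Rightarrow> nat \<Rightarrow> int ^ 'd \<Rightarrow> (nat \<Rightarrow> real \<times> real) set"
  where "first_entry \<omega> x Z B n z = {\<xi> \<in> space walk_space. jchain \<omega> x \<xi> n = z \<and>
    (\<forall>k<n. jchain \<omega> x \<xi> k \<notin> Z) \<and> (\<forall>k\<le>n. jchain \<omega> x \<xi> k \<in> B)}"

definition shift_sample :: "nat \<Rightarrow> (nat \<Rightarrow> 'a) \<Rightarrow> nat \<Rightarrow> 'a" where
  "shift_sample n \<xi> = (\<lambda>k. \<xi> (n + k))"

lemma sets_chain_reaches [measurable]: "chain_reaches \<omega> x Z B \<in> sets walk_space"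
  unfolding chain_reaches_def by measurable

lemma sets_first_entry [measurable]: "first_entry \<omega> x Z B n z \<in> sets walk_space"
  unfolding first_entry_def by measurable

lemma Pw_hit_before_exit:
  "Pw \<omega> x (\<lambda>X. hitT X Z < exitT X B) = measure walk_space (chain_reaches \<omega> x Z B)"
  unfolding Pw_def
proof (rule measure_eq_AE[OF _ sets_hit_before_exit sets_chain_reaches])
  show "AE \<xi> in walk_space. \<xi> \<in> {\<xi> \<in> space walk_space. hitT (wpath \<omega> x \<xi>) Z < exitT (wpath \<omega> x \<xi>) B}
      \<longleftrightarrow> \<xi> \<in> chain_reaches \<omega> x Z B"
    using AE_valid_sample
  proof eventually_elim
    case (elim \<xi>)
    then have "positive_holding \<xi>" by (rule valid_sample_positive_holding)
    then show ?case by (simp add: chain_reaches_def hit_before_exit_iff space_walk_space)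
  qed
qed

lemma Pw_hit_before_tauT_le:
  "Pw \<omega> x (\<lambda>X. hitT X Z < tauT r X)
    \<le> measure walk_space (chain_reaches \<omega> x Z {w. real_of_int (linfnorm (w - x)) < r})"
proof (rule Pw_le_measure[OF _ sets_chain_reaches])
  show "AE \<xi> in walk_space. hitT (wpath \<omega> x \<xi>) Z < tauT r (wpath \<omega> x \<xi>)
      \<longrightarrow> \<xi> \<in> chain_reaches \<omega> x Z {w. real_of_int (linfnorm (w - x)) < r}"
    using AE_valid_sample
  proof eventually_elim
    case (elim \<xi>)
    then have "positive_holding \<xi>" by (rule valid_sample_positive_holding)
    then show ?case
      by (simp add: chain_reaches_def hit_before_exit_iff tauT_wpath_eq_exitT space_walk_space)
  qed
qed

lemma measurable_shift_sample [measurable]: "shift_sample n \<in> measurable walk_space walk_space"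
  unfolding walk_space_eq_PiM shift_sample_def
  by (rule measurable_PiM_single'[where f="\<lambda>k \<xi>. \<xi> (n + k)"])
    (auto simp: space_PiM space_step_measure)

lemma measure_shift_sample_indep:
  assumes A: "A \<in> sets walk_space" and B: "B \<in> sets walk_space"
    and prefix: "\<And>\<xi> \<xi>'. (\<forall>k<n. \<xi> k = \<xi>' k) \<Longrightarrow> \<xi> \<in> A \<longleftrightarrow> \<xi>' \<in> A"
  shows "measure walk_space {\<xi> \<in> A. shift_sample n \<xi> \<in> B} = measure walk_space A * measure walk_space B"
proof -
  let ?S = "PiM UNIV (\<lambda>_::nat. step_measure)"
  let ?f = "\<lambda>(\<xi>, \<xi>'). comb_seq n \<xi> \<xi>'"
  let ?E = "{\<xi> \<in> A. shift_sample n \<xi> \<in> B}"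
  have "?E = A \<inter> (shift_sample n -` B \<inter> space walk_space)"
    by (auto simp: space_walk_space)
  then have E: "?E \<in> sets ?S"
    unfolding walk_space_eq_PiM[symmetric] using A B by (auto intro: measurable_sets)
  have preimage: "?f -` ?E \<inter> space (?S \<Otimes>\<^sub>M ?S) = A \<times> B"
  proof -
    have prefix_A: "comb_seq n \<xi> \<xi>' \<in> A \<longleftrightarrow> \<xi> \<in> A" for \<xi> \<xi>'
      by (rule prefix) (simp add: comb_seq_less)
    have shift_comb: "shift_sample n (comb_seq n \<xi> \<xi>') = \<xi>'" for \<xi> \<xi>'
      using comb_seq_add[of n \<xi> \<xi>'] by (simp add: shift_sample_def add.commute)
    show ?thesis
      by (auto simp: prefix_A shift_comb space_pair_measure space_walk_space[unfolded walk_space_eq_PiM])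
  qed
  have "measure ?S ?E = measure (distr (?S \<Otimes>\<^sub>M ?S) ?S ?f) ?E"
    by (simp add: steps.PiM_comb_seq)
  also have "\<dots> = measure (?S \<Otimes>\<^sub>M ?S) (A \<times> B)"
    unfolding preimage[symmetric] by (rule measure_distr[OF measurable_comb_seq E])
  also have "\<dots> = measure ?S A * measure ?S B"
    using A B unfolding walk_space_eq_PiM
    by (simp add: steps.P.emeasure_pair_measure_Times measure_def enn2real_mult)
  finally show ?thesis unfolding walk_space_eq_PiM .
qed

lemma chain_reaches_eq_UN_first_entry:
  "chain_reaches \<omega> x Z B = (\<Union>n. \<Union>z\<in>Z \<inter> B. first_entry \<omega> x Z B n z)"
proof (intro equalityI subsetI)
  fix \<xi> assume "\<xi> \<in> chain_reaches \<omega> x Z B"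
  then obtain n where n: "\<xi> \<in> space walk_space" "jchain \<omega> x \<xi> n \<in> Z"
    "\<forall>k\<le>n. jchain \<omega> x \<xi> k \<in> B"
    unfolding chain_reaches_def by blast
  define m where "m = (LEAST m. jchain \<omega> x \<xi> m \<in> Z)"
  have m: "jchain \<omega> x \<xi> m \<in> Z" unfolding m_def by (rule LeastI[of _ n]) (rule n(2))
  have "m \<le> n" unfolding m_def by (rule Least_le) (rule n(2))
  then have "\<forall>k\<le>m. jchain \<omega> x \<xi> k \<in> B" using n(3) by simp
  moreover have "\<forall>k<m. jchain \<omega> x \<xi> k \<notin> Z" unfolding m_def using not_less_Least by blast
  ultimately have "\<xi> \<in> first_entry \<omega> x Z B m (jchain \<omega> x \<xi> m)" "jchain \<omega> x \<xi> m \<in> Z \<inter> B"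
    using n(1) m by (auto simp: first_entry_def)
  then show "\<xi> \<in> (\<Union>n. \<Union>z\<in>Z \<inter> B. first_entry \<omega> x Z B n z)" by blast
next
  fix \<xi> assume "\<xi> \<in> (\<Union>n. \<Union>z\<in>Z \<inter> B. first_entry \<omega> x Z B n z)"
  then obtain n z where "z \<in> Z" "\<xi> \<in> first_entry \<omega> x Z B n z" by blast
  then show "\<xi> \<in> chain_reaches \<omega> x Z B" unfolding first_entry_def chain_reaches_def by blast
qed

lemma first_entry_unique:
  assumes "\<xi> \<in> first_entry \<omega> x Z B n z" "\<xi> \<in> first_entry \<omega> x Z B n' z'" "z \<in> Z" "z' \<in> Z"
  shows "n = n' \<and> z = z'"
proof -
  have "\<not> n < n'" "\<not> n' < n" using assms by (auto simp: first_entry_def)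
  then show ?thesis using assms by (auto simp: first_entry_def)
qed

lemma measure_first_entry_shift:
  assumes "E \<in> sets walk_space"
  shows "measure walk_space {\<xi> \<in> first_entry \<omega> x Z B n z. shift_sample n \<xi> \<in> E}
    = measure walk_space (first_entry \<omega> x Z B n z) * measure walk_space E"
proof (rule measure_shift_sample_indep[OF sets_first_entry assms])
  fix \<xi> \<xi>' :: "nat \<Rightarrow> real \<times> real" assume "\<forall>k<n. \<xi> k = \<xi>' k"
  then have "jchain \<omega> x \<xi> k = jchain \<omega> x \<xi>' k" if "k \<le> n" for k
    using that by (intro jchain_cong_prefix) auto
  then show "\<xi> \<in> first_entry \<omega> x Z B n z \<longleftrightarrow> \<xi>' \<in> first_entry \<omega> x Z B n z"
    by (auto simp: first_entry_def space_walk_space)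
qed

lemma first_entry_then_reaches:
  assumes "\<xi> \<in> first_entry \<omega> x Z B n z" and "shift_sample n \<xi> \<in> chain_reaches \<omega> z Y N"
    and "B \<subseteq> B'" and "N \<subseteq> B'"
  shows "\<xi> \<in> chain_reaches \<omega> x Y B'"
proof -
  obtain m where m: "jchain \<omega> z (shift_sample n \<xi>) m \<in> Y"
    "\<forall>k\<le>m. jchain \<omega> z (shift_sample n \<xi>) k \<in> N"
    using assms(2) unfolding chain_reaches_def by blast
  have shifted: "jchain \<omega> x \<xi> (n + j) = jchain \<omega> z (shift_sample n \<xi>) j" for j
    using jchain_add[of \<omega> x \<xi> n j] assms(1) by (simp add: first_entry_def shift_sample_def)
  have "jchain \<omega> x \<xi> k \<in> B'" if "k \<le> n + m" for k
  proof (cases "k \<le> n")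
    case True
    then show ?thesis using assms(1,3) by (auto simp: first_entry_def)
  next
    case False
    then have "jchain \<omega> x \<xi> k = jchain \<omega> z (shift_sample n \<xi>) (k - n)"
      using shifted[of "k - n"] by simp
    moreover have "k - n \<le> m" using that by simp
    ultimately show ?thesis using m(2) assms(4) by auto
  qed
  moreover have "\<xi> \<in> space walk_space" using assms(1) by (simp add: first_entry_def)
  ultimately show ?thesis
    using m(1) shifted[of m] unfolding chain_reaches_def by (auto intro!: exI[of _ "n + m"])
qed

lemma sets_first_entry_shift:
  assumes "E \<in> sets walk_space"
  shows "{\<xi> \<in> first_entry \<omega> x Z B n z. shift_sample n \<xi> \<in> E} \<in> sets walk_space"
proof -
  have "{\<xi> \<in> first_entry \<omega> x Z B n z. shift_sample n \<xi> \<in> E}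
      = first_entry \<omega> x Z B n z \<inter> (shift_sample n -` E \<inter> space walk_space)"
    by (auto simp: space_walk_space)
  also have "\<dots> \<in> sets walk_space"
    using assms by (intro sets.Int sets_first_entry measurable_sets[OF measurable_shift_sample])
  finally show ?thesis .
qed

text \<open>Strong Markov property at the first entrance of the chain into \<open>Z\<close>: decomposing by the
  time and place of that entrance reduces it to the independence of a prefix of the sample from
  the shifted sample.\<close>

lemma first_entries_strong_markov:
  assumes fin: "finite F" and "F \<subseteq> UNIV \<times> Z"
    and bound: "\<And>p. p \<in> F \<Longrightarrow> c \<le> measure walk_space (chain_reaches \<omega> (snd p) Y (N (snd p)))"
    and N: "\<And>p. p \<in> F \<Longrightarrow> N (snd p) \<subseteq> B'" and "B \<subseteq> B'"
  shows "c * measure walk_space (\<Union>p\<in>F. first_entry \<omega> x Z B (fst p) (snd p))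
    \<le> measure walk_space (chain_reaches \<omega> x Y B')"
proof -
  let ?M = "measure walk_space"
  let ?D = "\<lambda>p. chain_reaches \<omega> (snd p) Y (N (snd p))"
  let ?C = "\<lambda>p. first_entry \<omega> x Z B (fst p) (snd p)"
  let ?H = "\<lambda>p. {\<xi> \<in> ?C p. shift_sample (fst p) \<xi> \<in> ?D p}"
  have disj: "disjoint_family_on ?C F"
  proof (unfold disjoint_family_on_def, intro ballI impI)
    fix p q assume pq: "p \<in> F" "q \<in> F" "p \<noteq> q"
    then have "snd p \<in> Z" "snd q \<in> Z" using assms(2) by auto
    then show "?C p \<inter> ?C q = {}"
      using first_entry_unique[of _ \<omega> x Z B "fst p" "snd p" "fst q" "snd q"] pq(3)
      by (auto simp: prod_eq_iff)
  qed
  have "c * ?M (\<Union>p\<in>F. ?C p) = (\<Sum>p\<in>F. c * ?M (?C p))"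
    using fin disj by (subst walk.finite_measure_finite_Union) (auto simp: sum_distrib_left)
  also have "\<dots> \<le> (\<Sum>p\<in>F. ?M (?C p) * ?M (?D p))"
  proof (rule sum_mono)
    fix p assume "p \<in> F"
    then have "c * ?M (?C p) \<le> ?M (?D p) * ?M (?C p)"
      using bound by (intro mult_right_mono) auto
    then show "c * ?M (?C p) \<le> ?M (?C p) * ?M (?D p)" by (simp add: mult.commute)
  qed
  also have "\<dots> = (\<Sum>p\<in>F. ?M (?H p))"
    by (simp add: measure_first_entry_shift)
  also have "\<dots> = ?M (\<Union>p\<in>F. ?H p)"
    using fin disjoint_family_on_bisimulation[OF disj, of ?H]
    by (intro walk.finite_measure_finite_Union[symmetric]) (auto intro: sets_first_entry_shift)
  also have "\<dots> \<le> ?M (chain_reaches \<omega> x Y B')"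
  proof (rule walk.finite_measure_mono[OF subsetI sets_chain_reaches])
    fix \<xi> assume "\<xi> \<in> (\<Union>p\<in>F. ?H p)"
    then obtain p where "p \<in> F" "\<xi> \<in> ?C p" "shift_sample (fst p) \<xi> \<in> ?D p" by auto
    then show "\<xi> \<in> chain_reaches \<omega> x Y B'"
      using first_entry_then_reaches N assms(5) by blast
  qed
  finally show ?thesis .
qed

lemma chain_reaches_strong_markov:
  assumes "finite B"
    and bound: "\<And>z. z \<in> Z \<inter> B \<Longrightarrow> c \<le> measure walk_space (chain_reaches \<omega> z Y (N z))"
    and N: "\<And>z. z \<in> Z \<inter> B \<Longrightarrow> N z \<subseteq> B'" and "B \<subseteq> B'"
  shows "c * measure walk_space (chain_reaches \<omega> x Z B) \<le> measure walk_space (chain_reaches \<omega> x Y B')"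
proof -
  let ?M = "measure walk_space"
  let ?G = "\<lambda>n0. \<Union>p\<in>{..<n0} \<times> (Z \<inter> B). first_entry \<omega> x Z B (fst p) (snd p)"
  have bounded: "c * ?M (?G n0) \<le> ?M (chain_reaches \<omega> x Y B')" for n0
  proof (rule first_entries_strong_markov[where N = N])
    fix p assume "p \<in> {..<n0} \<times> (Z \<inter> B)"
    then have "snd p \<in> Z \<inter> B" by auto
    then show "c \<le> ?M (chain_reaches \<omega> (snd p) Y (N (snd p)))" "N (snd p) \<subseteq> B'"
      by (fact bound, fact N)
  qed (use assms(1,4) in auto)
  have "(\<Union>n0. ?G n0) = (\<Union>n. \<Union>z\<in>Z \<inter> B. first_entry \<omega> x Z B n z)"
  proof (intro equalityI subsetI)
    fix \<xi> assume "\<xi> \<in> (\<Union>n. \<Union>z\<in>Z \<inter> B. first_entry \<omega> x Z B n z)"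
    then obtain n z where "(n, z) \<in> {..<Suc n} \<times> (Z \<inter> B)" "\<xi> \<in> first_entry \<omega> x Z B n z" by auto
    then show "\<xi> \<in> (\<Union>n0. ?G n0)" by force
  qed auto
  then have "(\<Union>n0. ?G n0) = chain_reaches \<omega> x Z B"
    by (simp only: chain_reaches_eq_UN_first_entry)
  moreover have "incseq ?G"
    by (intro monoI UN_mono) auto
  moreover have "range ?G \<subseteq> sets walk_space"
    using assms(1) by (auto intro!: sets.finite_UN)
  ultimately have "(\<lambda>n0. ?M (?G n0)) \<longlonglongrightarrow> ?M (chain_reaches \<omega> x Z B)"
    using walk.finite_Lim_measure_incseq[of ?G] by simp
  then have "(\<lambda>n0. c * ?M (?G n0)) \<longlonglongrightarrow> c * ?M (chain_reaches \<omega> x Z B)"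
    by (rule tendsto_mult_left)
  then show ?thesis using bounded by (intro LIMSEQ_le_const2) auto
qed

section \<open>Crossing the interface between the two phases\<close>

lemma exists_crossing:
  fixes f :: "nat \<Rightarrow> 'a"
  assumes "P (f 0)" and "\<not> P (f n)"
  shows "\<exists>m<n. P (f m) \<and> \<not> P (f (Suc m))"
  using assms(2)
proof (induction n)
  case (Suc n)
  then show ?case by (cases "P (f n)") (auto intro: less_SucI)
qed (use assms(1) in simp)

lemma jchain_crosses_interface:
  assumes "valid_sample \<xi>" "x \<in> Sinf \<omega>" "U0 \<subseteq> Sinf \<omega>"
    and "jchain \<omega> x \<xi> n \<in> (if x \<in> U0 then U1 \<omega> U0 else U0)"
  shows "\<exists>m\<le>n. jchain \<omega> x \<xi> m \<in> Sbd \<omega> U0"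
proof -
  let ?Y = "jchain \<omega> x \<xi>"
  have in_U1: "?Y m \<in> U1 \<omega> U0" if "?Y m \<notin> U0" for m
    using jchain_in_Sinf[OF assms(1,2)] that by (simp add: U1_def)
  have adj_step: "adj (?Y m) (?Y (Suc m))" if "?Y (Suc m) \<noteq> ?Y m" for m
    using jchain_Suc_cases[OF assms(1)] that by blast
  show ?thesis
  proof (cases "x \<in> U0")
    case True
    then have "?Y n \<notin> U0" using assms(4) by (simp add: U1_def)
    then obtain m where m: "m < n" "?Y m \<in> U0" "?Y (Suc m) \<notin> U0"
      using exists_crossing[of "\<lambda>z. z \<in> U0" ?Y n] True by auto
    then have "adj (?Y (Suc m)) (?Y m)" using adj_step[of m] adj_commute by metis
    then have "?Y (Suc m) \<in> Sbd \<omega> U0" using m(2,3) in_U1 unfolding Sbd_def by blast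
    then show ?thesis using m(1) Suc_leI by blast
  next
    case False
    then have "?Y n \<in> U0" using assms(4) by simp
    then obtain m where m: "m < n" "?Y m \<notin> U0" "?Y (Suc m) \<in> U0"
      using exists_crossing[of "\<lambda>z. z \<notin> U0" ?Y n] False by auto
    then have "adj (?Y m) (?Y (Suc m))" using adj_step[of m] by metis
    then have "?Y m \<in> Sbd \<omega> U0" using m(2,3) in_U1 unfolding Sbd_def by blast
    then show ?thesis using m(1) less_imp_le by blast
  qed
qed

lemma card_mul_le_measure_reaches_interface:
  assumes "U0 \<subseteq> Sinf \<omega>" "y \<in> Sinf \<omega>" "finite T" "T \<subseteq> (if y \<in> U0 then U1 \<omega> U0 else U0)"
    and "0 \<le> t" and p: "\<And>y'. y' \<in> T \<Longrightarrow> p \<le> Pw \<omega> y (\<lambda>X. X t = y' \<and> ereal t < exitT X B)"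
  shows "real (card T) * p \<le> measure walk_space (chain_reaches \<omega> y (Sbd \<omega> U0) B)"
proof -
  let ?A = "\<lambda>y'. {\<xi> \<in> space walk_space. wpath \<omega> y \<xi> t = y' \<and> ereal t < exitT (wpath \<omega> y \<xi>) B}"
  have "real (card T) * p = (\<Sum>y'\<in>T. p)" by simp
  also have "\<dots> \<le> (\<Sum>y'\<in>T. measure walk_space (?A y'))"
    using p unfolding Pw_def by (intro sum_mono) auto
  also have "\<dots> \<le> measure walk_space (chain_reaches \<omega> y (Sbd \<omega> U0) B)"
  proof (rule walk.sum_measure_le_AE[OF assms(3) _ _ sets_chain_reaches])
    show "disjoint_family_on ?A T" by (auto simp: disjoint_family_on_def)
    fix y' assume "y' \<in> T"
    show "AE \<xi> in walk_space. \<xi> \<in> ?A y' \<longrightarrow> \<xi> \<in> chain_reaches \<omega> y (Sbd \<omega> U0) B"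
      using AE_valid_sample
    proof eventually_elim
      case (elim \<xi>)
      show ?case
      proof
        assume A: "\<xi> \<in> ?A y'"
        then obtain n where n: "wpath \<omega> y \<xi> t = jchain \<omega> y \<xi> n" "\<forall>k\<le>n. jchain \<omega> y \<xi> k \<in> B"
          using wpath_inside_before_exit[OF valid_sample_positive_holding[OF elim] assms(5)] by blast
        then have "jchain \<omega> y \<xi> n \<in> (if y \<in> U0 then U1 \<omega> U0 else U0)"
          using A \<open>y' \<in> T\<close> assms(4) by auto
        then obtain m where "m \<le> n" "jchain \<omega> y \<xi> m \<in> Sbd \<omega> U0"
          using jchain_crosses_interface[OF elim assms(2,1)] by blast
        then show "\<xi> \<in> chain_reaches \<omega> y (Sbd \<omega> U0) B"
          using n(2) by (auto simp: chain_reaches_def space_walk_space)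
      qed
    qed
  qed
  finally show ?thesis .
qed

lemma two_phases_card_ge:
  assumes "finite S" "P \<subseteq> S" "0 < card S"
    and "\<alpha> \<le> real (card P) / real (card S)" "real (card P) / real (card S) \<le> 1 - \<alpha>"
  shows "\<alpha> * real (card S) \<le> real (card P)" and "\<alpha> * real (card S) \<le> real (card (S - P))"
proof -
  show "\<alpha> * real (card S) \<le> real (card P)" using assms(3,4) by (simp add: field_simps)
  have "real (card P) \<le> (1 - \<alpha>) * real (card S)" using assms(3,5) by (simp add: field_simps)
  moreover have "real (card (S - P)) = real (card S) - real (card P)"
    using assms(1,2) by (simp add: card_Diff_subset finite_subset of_nat_diff card_mono)
  ultimately show "\<alpha> * real (card S) \<le> real (card (S - P))" by (simp add: algebra_simps)
qed

lemma measure_reaches_interface_ge: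
  assumes "U0 \<subseteq> Sinf \<omega>" "y \<in> Sinf \<omega>" "finite Q" "0 \<le> t"
    and "0 < V" "V \<le> real (card Q)" "0 < \<rho>" "0 \<le> \<alpha>" "0 \<le> c"
    and density: "\<rho> \<le> real (card (Sinf \<omega> \<inter> Q)) / real (card Q)"
    and phases: "\<alpha> \<le> real (card (Q \<inter> U1 \<omega> U0)) / real (card (Q \<inter> Sinf \<omega>))"
      "real (card (Q \<inter> U1 \<omega> U0)) / real (card (Q \<inter> Sinf \<omega>)) \<le> 1 - \<alpha>"
    and kernel: "\<And>y'. y' \<in> Sinf \<omega> \<inter> Q \<Longrightarrow> c / V \<le> Pw \<omega> y (\<lambda>X. X t = y' \<and> ereal t < exitT X B)"
  shows "\<alpha> * \<rho> * c \<le> measure walk_space (chain_reaches \<omega> y (Sbd \<omega> U0) B)"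
proof -
  let ?S = "Q \<inter> Sinf \<omega>"
  let ?T = "Q \<inter> (if y \<in> U0 then U1 \<omega> U0 else U0)"
  have "0 < real (card Q)" using assms(5,6) by linarith
  then have dense: "\<rho> * real (card Q) \<le> real (card ?S)"
    using density by (simp add: field_simps Int_commute)
  have "\<rho> * V \<le> \<rho> * real (card Q)" using assms(6,7) by simp
  also note dense
  finally have \<rho>V: "\<rho> * V \<le> real (card ?S)" .
  moreover have "0 < \<rho> * V" using assms(5,7) by simp
  ultimately have "0 < card ?S" by linarith
  moreover have "Q \<inter> U1 \<omega> U0 \<subseteq> ?S" by (auto simp: U1_def)
  ultimately have ge: "\<alpha> * real (card ?S) \<le> real (card (Q \<inter> U1 \<omega> U0))"
      "\<alpha> * real (card ?S) \<le> real (card (?S - Q \<inter> U1 \<omega> U0))"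
    using two_phases_card_ge[of ?S "Q \<inter> U1 \<omega> U0" \<alpha>] assms(3) phases by simp_all
  have card_T: "\<alpha> * real (card ?S) \<le> real (card ?T)"
  proof (cases "y \<in> U0")
    case True
    then show ?thesis using ge(1) by simp
  next
    case False
    then have "?T = ?S - Q \<inter> U1 \<omega> U0" using assms(1) by (auto simp: U1_def)
    then show ?thesis using ge(2) by simp
  qed
  have "\<alpha> * \<rho> * c = (\<alpha> * (\<rho> * V)) * (c / V)" using assms(5) by simp
  also have "\<dots> \<le> real (card ?T) * (c / V)"
    using mult_left_mono[OF \<rho>V assms(8)] card_T assms(5,9) by (intro mult_right_mono) auto
  also have "\<dots> \<le> measure walk_space (chain_reaches \<omega> y (Sbd \<omega> U0) B)"
  proof (rule card_mul_le_measure_reaches_interface[OF assms(1,2) _ _ assms(4)])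
    show "finite ?T" "?T \<subseteq> (if y \<in> U0 then U1 \<omega> U0 else U0)" using assms(3) by auto
    fix y' assume "y' \<in> ?T"
    then have "y' \<in> Sinf \<omega> \<inter> Q" using assms(1) by (auto simp: U1_def split: if_splits)
    then show "c / V \<le> Pw \<omega> y (\<lambda>X. X t = y' \<and> ereal t < exitT X B)" by (rule kernel)
  qed
  finally show ?thesis .
qed

section \<open>Regularity at a fixed scale\<close>

definition volume_regular_at :: "(int ^ 'd \<Rightarrow> bool) \<Rightarrow> real \<Rightarrow> real \<Rightarrow> real \<Rightarrow> real \<Rightarrow> real \<Rightarrow> bool"
  where "volume_regular_at \<omega> \<alpha> \<eta> kr DS R \<longleftrightarrow> (\<forall>x \<in> Sinf \<omega> \<inter> ballinf 0 (r_reg kr DS R).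
     (1 - \<alpha>) * \<eta> \<le> real (card (Sinf \<omega> \<inter> ballinf x R)) / real (card (ballinf x R)) \<and>
     real (card (Sinf \<omega> \<inter> ballinf x R)) / real (card (ballinf x R)) \<le> (1 + \<alpha>) * \<eta>)"

definition killed_hk_at :: "(int ^ 'd \<Rightarrow> bool) \<Rightarrow> real \<Rightarrow> real \<Rightarrow> real \<Rightarrow> real \<Rightarrow> real \<Rightarrow> nat \<Rightarrow> bool"
  where "killed_hk_at \<omega> \<theta> kr DS ck1 ck2 R \<longleftrightarrow>
     (\<forall>x0 \<in> Sinf \<omega> \<inter> ballinf 0 (r_reg kr DS (real R)).
      \<forall>x \<in> Sinf \<omega> \<inter> ballinf x0 ((1 - \<theta>) * real R).
      \<forall>y \<in> Sinf \<omega> \<inter> ballinf x0 ((1 - \<theta>) * real R).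
      \<forall>t. ck2 * real R ^ 2 \<le> t \<and> t \<le> real R ^ 2 \<longrightarrow>
        Pw \<omega> x (\<lambda>X. X t = y \<and> exitT X (ballinf x0 (real R) \<inter> Sinf \<omega>) > ereal t) / deg \<omega> y
          \<ge> ck1 * t powr (- real CARD('d) / 2))"

lemma den_ok_iff_volume_regular_at:
  "den_ok \<omega> \<alpha> \<eta> kr DS \<longleftrightarrow> (\<exists>R0. \<forall>R\<ge>R0. volume_regular_at \<omega> \<alpha> \<eta> kr DS R)"
  unfolding den_ok_def volume_regular_at_def ..

lemma khk_ok_iff_killed_hk_at:
  "khk_ok \<omega> \<theta> kr DS ck1 ck2 \<longleftrightarrow> (\<exists>R0. \<forall>R\<ge>R0. killed_hk_at \<omega> \<theta> kr DS ck1 ck2 R)"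
  unfolding khk_ok_def killed_hk_at_def ..

lemma le_of_le_divide_nat:
  fixes c p :: real and n :: nat
  assumes "0 < c" and "c \<le> p / real n"
  shows "c \<le> p"
proof -
  have "n \<noteq> 0"
  proof
    assume "n = 0"
    then show False using assms by simp
  qed
  then have "c * 1 \<le> (p / real n) * real n" using assms by (intro mult_mono) auto
  with \<open>n \<noteq> 0\<close> show ?thesis by simp
qed

lemma power2_powr_neg_half: "0 < (R::real) \<Longrightarrow> (R ^ 2) powr (- real d / 2) = 1 / R ^ d"
proof -
  assume R: "0 < R"
  have "(R ^ 2) powr (- real d / 2) = (R powr 2) powr (- real d / 2)" using R by (simp add: powr_realpow)
  also have "\<dots> = R powr (- real d)" by (simp add: powr_powr)
  also have "\<dots> = 1 / R ^ d" using R by (simp add: powr_minus powr_realpow divide_inverse)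
  finally show ?thesis .
qed

lemma killed_hk_at_imp_Pw_ge:
  fixes \<omega> :: "int ^ 'd \<Rightarrow> bool"
  assumes "killed_hk_at \<omega> \<theta> kr DS ck1 ck2 R" "0 < ck1" "ck2 \<le> 1" "0 < R"
    and "x0 \<in> Sinf \<omega> \<inter> ballinf 0 (r_reg kr DS (real R))"
    and "x \<in> Sinf \<omega> \<inter> ballinf x0 ((1 - \<theta>) * real R)" "y \<in> Sinf \<omega> \<inter> ballinf x0 ((1 - \<theta>) * real R)"
  shows "ck1 / real R ^ CARD('d)
    \<le> Pw \<omega> x (\<lambda>X. X (real R ^ 2) = y \<and> ereal (real R ^ 2) < exitT X (ballinf x0 (real R) \<inter> Sinf \<omega>))"
proof (rule le_of_le_divide_nat[where n = "card (nbrs \<omega> y)"])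
  show "0 < ck1 / real R ^ CARD('d)" using assms(2,4) by simp
  have "ck2 * real R ^ 2 \<le> real R ^ 2" using mult_right_mono[OF assms(3), of "real R ^ 2"] by simp
  moreover have "\<forall>t. ck2 * real R ^ 2 \<le> t \<and> t \<le> real R ^ 2 \<longrightarrow>
      ck1 * t powr (- real CARD('d) / 2)
        \<le> Pw \<omega> x (\<lambda>X. X t = y \<and> ereal t < exitT X (ballinf x0 (real R) \<inter> Sinf \<omega>)) / deg \<omega> y"
    using assms(1,5-7) unfolding killed_hk_at_def by blast
  ultimately have "ck1 * (real R ^ 2) powr (- real CARD('d) / 2)
      \<le> Pw \<omega> x (\<lambda>X. X (real R ^ 2) = y \<and> ereal (real R ^ 2) < exitT X (ballinf x0 (real R) \<inter> Sinf \<omega>))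
        / deg \<omega> y"
    by simp
  moreover have "(real R ^ 2) powr (- real CARD('d) / 2) = 1 / real R ^ CARD('d)"
    by (rule power2_powr_neg_half) (use assms(4) in simp)
  ultimately show "ck1 / real R ^ CARD('d) \<le> Pw \<omega> x (\<lambda>X. X (real R ^ 2) = y \<and>
      ereal (real R ^ 2) < exitT X (ballinf x0 (real R) \<inter> Sinf \<omega>)) / real (card (nbrs \<omega> y))"
    by (simp add: deg_def)
qed

lemma interface_reached_at_scale:
  fixes \<omega> :: "int ^ 'd \<Rightarrow> bool" and l :: nat
  assumes "0 < \<eta>" "0 < ck1" "ck2 \<le> 1" "0 < kr" "0 < DS" "1 \<le> l"
    and vol: "volume_regular_at \<omega> (1/3) \<eta> kr DS (4 * 2 ^ l)"
    and khk: "killed_hk_at \<omega> (1/9) kr DS ck1 ck2 (9 * 2 ^ (l - 1))"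
    and U0: "U0 \<subseteq> Sinf \<omega>"
    and x0: "x0 \<in> Sinf \<omega> \<inter> ballinf 0 (r_reg kr DS (4 * 2 ^ l))"
    and sigma: "alphat TYPE('d) \<le> sigmat \<omega> U0 l x0" "sigmat \<omega> U0 l x0 \<le> 1 - alphat TYPE('d)"
    and y: "y \<in> Sinf \<omega> \<inter> ballinf x0 (4 * 2 ^ l)"
  shows "alphat TYPE('d) * (2/3) * \<eta> * ck1 \<le> measure walk_space
    (chain_reaches \<omega> y (Sbd \<omega> U0) (ballinf x0 (real (9 * 2 ^ (l - 1))) \<inter> Sinf \<omega>))"
proof -
  define P :: nat where "P = 2 ^ (l - 1)"
  define R :: nat where "R = 9 * P"
  define B4 where "B4 = ballinf x0 (4 * 2 ^ l)"
  have two_l: "(2::real) ^ l = 2 * real P" using assms(6) unfolding P_def by (cases l) auto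
  have "1 \<le> P" unfolding P_def by simp
  have B4_eq: "B4 = ballinf x0 ((1 - 1/9) * real R)" "B4 = ballinf x0 (real (8 * P))"
    unfolding B4_def R_def two_l by simp_all
  have "r_reg kr DS (4 * 2 ^ l) \<le> r_reg kr DS (real R)"
    using assms(4,5) \<open>1 \<le> P\<close> unfolding R_def two_l by (intro r_reg_mono) auto
  then have x0_R: "x0 \<in> Sinf \<omega> \<inter> ballinf 0 (r_reg kr DS (real R))"
    using x0 ballinf_mono by blast
  have kernel: "ck1 / real R ^ CARD('d) \<le> Pw \<omega> y (\<lambda>X. X (real R ^ 2) = y' \<and>
      ereal (real R ^ 2) < exitT X (ballinf x0 (real R) \<inter> Sinf \<omega>))" if "y' \<in> Sinf \<omega> \<inter> B4" for y'
    using killed_hk_at_imp_Pw_ge[OF khk[folded P_def, folded R_def] assms(2,3) _ x0_R] that y \<open>1 \<le> P\<close>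
    unfolding B4_eq(1) B4_def[symmetric] R_def by simp
  have "real R ^ CARD('d) \<le> real (2 * (8 * P) + 1) ^ CARD('d)"
    unfolding R_def by (intro power_mono) auto
  also have "\<dots> \<le> real (card B4)" unfolding B4_eq(2) by (rule card_ballinf_ge)
  finally have volume: "real R ^ CARD('d) \<le> real (card B4)" .
  have density: "2/3 * \<eta> \<le> real (card (Sinf \<omega> \<inter> B4)) / real (card B4)"
    using vol x0 unfolding volume_regular_at_def B4_def by auto
  have "alphat TYPE('d) * (2/3 * \<eta>) * ck1
      \<le> measure walk_space (chain_reaches \<omega> y (Sbd \<omega> U0) (ballinf x0 (real R) \<inter> Sinf \<omega>))"
    using U0 y finite_ballinf volume density sigma kernel assms(1,2) \<open>1 \<le> P\<close>
    by (intro measure_reaches_interface_ge[where Q = B4 and t = "real R ^ 2"])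
      (auto simp: B4_def sigmat_def R_def alphat_def)
  then show ?thesis unfolding R_def P_def by (simp add: mult.assoc)
qed

lemma hit_before_exit_at_scale:
  fixes \<omega> :: "int ^ 'd \<Rightarrow> bool" and l \<epsilon> :: nat
  assumes "0 < \<eta>" "0 < ck1" "ck2 \<le> 1" "0 < kr" "0 < DS" "1 \<le> l" "0 \<le> ch"
    and "volume_regular_at \<omega> (1/3) \<eta> kr DS (4 * 2 ^ l)"
    and "killed_hk_at \<omega> (1/9) kr DS ck1 ck2 (9 * 2 ^ (l - 1))"
    and "U0 \<subseteq> Sinf \<omega>" and Sg: "Sg \<in> Scal \<omega> U0 \<epsilon> ch" and eps: "real \<epsilon> \<le> 2 ^ l / 4"
    and "x0 \<in> Sinf \<omega> \<inter> ballinf 0 (r_reg kr DS (4 * 2 ^ l))"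
    and "alphat TYPE('d) \<le> sigmat \<omega> U0 l x0" "sigmat \<omega> U0 l x0 \<le> 1 - alphat TYPE('d)"
    and y: "y \<in> Sinf \<omega>" "eucl (y - x0) \<le> 2 ^ l / 4"
  shows "ch * (alphat TYPE('d) * (2/3) * \<eta> * ck1)
    \<le> Pw \<omega> y (\<lambda>X. hitT X Sg < exitT X (ballinf x0 (5 * 2 ^ l)))"
proof -
  define R :: nat where "R = 9 * 2 ^ (l - 1)"
  define BR where "BR = ballinf x0 (real R) \<inter> Sinf \<omega>"
  define B5 where "B5 = ballinf x0 (5 * 2 ^ l)"
  define N where "N z = {w. real_of_int (linfnorm (w - z)) < real \<epsilon>}" for z :: "int ^ 'd"
  have "(2::real) ^ l = 2 * 2 ^ (l - 1)" using assms(6) by (cases l) auto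
  moreover have "real R = 9 * 2 ^ (l - 1)" unfolding R_def by simp
  ultimately have radius: "real R + real \<epsilon> \<le> 5 * 2 ^ l"
    using eps zero_le_power[of "2::real" "l - 1"] by linarith
  have "real_of_int (linfnorm (y - x0)) \<le> 4 * 2 ^ l"
    using linfnorm_le_eucl[of "y - x0"] y(2) zero_le_power[of "2::real" l] by linarith
  then have "y \<in> Sinf \<omega> \<inter> ballinf x0 (4 * 2 ^ l)" using y(1) by (simp add: ballinf_def)
  then have interface: "alphat TYPE('d) * (2/3) * \<eta> * ck1
      \<le> measure walk_space (chain_reaches \<omega> y (Sbd \<omega> U0) BR)"
    unfolding BR_def R_def using assms by (intro interface_reached_at_scale) auto
  have "ch * measure walk_space (chain_reaches \<omega> y (Sbd \<omega> U0) BR)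
      \<le> measure walk_space (chain_reaches \<omega> y Sg B5)"
  proof (rule chain_reaches_strong_markov[where N = N])
    show "finite BR" unfolding BR_def using finite_ballinf by blast
    have "real R \<le> 5 * 2 ^ l" using radius by linarith
    then show "BR \<subseteq> B5" unfolding BR_def B5_def using ballinf_mono by blast
    fix z assume z: "z \<in> Sbd \<omega> U0 \<inter> BR"
    then have "ch \<le> Pw \<omega> z (\<lambda>X. hitT X Sg < tauT (real \<epsilon>) X)" using Sg by (simp add: Scal_def)
    also have "\<dots> \<le> measure walk_space (chain_reaches \<omega> z Sg (N z))"
      unfolding N_def by (rule Pw_hit_before_tauT_le)
    finally show "ch \<le> measure walk_space (chain_reaches \<omega> z Sg (N z))" .
    show "N z \<subseteq> B5"
      using z ballinf_triangle[of z x0 "real R"] ballinf_mono[OF radius]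
      unfolding N_def BR_def B5_def by blast
  qed
  then have "ch * (alphat TYPE('d) * (2/3) * \<eta> * ck1) \<le> measure walk_space (chain_reaches \<omega> y Sg B5)"
    using mult_left_mono[OF interface assms(7)] by linarith
  then show ?thesis unfolding B5_def Pw_hit_before_exit .
qed

lemma scale_thresholds:
  fixes R0d :: real and R0k l :: nat
  assumes "\<bar>R0d\<bar> + real R0k + 1 \<le> real l"
  shows "1 \<le> l" and "R0d \<le> 4 * 2 ^ l" and "R0k \<le> 9 * 2 ^ (l - 1)"
proof -
  show "1 \<le> l" using assms by linarith
  have "l < 2 ^ l" by (rule less_exp)
  moreover have "(2::nat) ^ l = 2 * 2 ^ (l - 1)" using \<open>1 \<le> l\<close> by (cases l) auto
  ultimately show "R0k \<le> 9 * 2 ^ (l - 1)" using assms by linarith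
  have "real l < 2 ^ l" using \<open>l < 2 ^ l\<close> by (metis of_nat_less_iff of_nat_numeral of_nat_power)
  then show "R0d \<le> 4 * 2 ^ l" using assms by linarith
qed

theorem lemma4p12:
  fixes \<eta> kr DS c1 c2 c3 c4 ck1 ck2 :: real
    and A :: "(real ^ 'd) set" and b :: "nat \<Rightarrow> real"
  assumes "CARD('d::finite) \<ge> 3"
    and "0 < \<eta>" "\<eta> \<le> 1" "0 < kr" "0 < DS"
    and "0 < c1" "0 < c2" "0 < c3" "0 < c4" "0 < ck1" "0 < ck2" "ck2 \<le> 1"
    and "compact A" "\<forall>N. 0 < b N"
  shows "\<exists>c5 :: real \<Rightarrow> real. (\<forall>ch. 0 < ch \<and> ch < 1 \<longrightarrow> 0 < c5 ch) \<and>
    (\<forall>\<omega> \<in> Omega_reg (1/3) (1/9) \<eta> kr DS c1 c2 c3 c4 ck1 ck2.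
      \<exists>c4' :: real. \<forall>(N::nat) (ls::nat) (U0 :: (int ^ 'd) set) (\<epsilon>::nat) (ch::real) Sg (l::nat) x0 y.
        1 \<le> N \<longrightarrow> U0 \<in> Ucal \<omega> A b ls N \<longrightarrow> 0 < ch \<longrightarrow> ch < 1 \<longrightarrow>
        Sg \<in> Scal \<omega> U0 \<epsilon> ch \<longrightarrow> c4' \<le> real l \<longrightarrow> real \<epsilon> \<le> 2 ^ l / 4 \<longrightarrow>
        x0 \<in> Sinf \<omega> \<inter> ballinf 0 (r_reg kr DS (4 * 2 ^ l)) \<longrightarrow>
        alphat TYPE('d) \<le> sigmat \<omega> U0 l x0 \<longrightarrow> sigmat \<omega> U0 l x0 \<le> 1 - alphat TYPE('d) \<longrightarrow>
        y \<in> Sinf \<omega> \<longrightarrow> eucl (y - x0) \<le> 2 ^ l / 4 \<longrightarrow>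
        c5 ch \<le> Pw \<omega> y (\<lambda>X. hitT X Sg < exitT X (ballinf x0 (5 * 2 ^ l))))"
proof -
  define K where "K = alphat TYPE('d) * (2/3) * \<eta> * ck1"
  have K_pos: "0 < K" using assms by (simp add: K_def alphat_def)
  show ?thesis
    apply (intro exI[of _ "\<lambda>ch. ch * K"] conjI allI impI ballI)
    subgoal using K_pos by simp
    subgoal premises config for \<omega>
    proof -
      obtain R0d R0k where vol: "\<forall>R\<ge>R0d. volume_regular_at \<omega> (1/3) \<eta> kr DS R"
        and khk: "\<forall>R\<ge>R0k. killed_hk_at \<omega> (1/9) kr DS ck1 ck2 R"
        using config by (auto simp: Omega_reg_def den_ok_iff_volume_regular_at khk_ok_iff_killed_hk_at)
      show ?thesis
        apply (intro exI[of _ "\<bar>R0d\<bar> + real R0k + 1"] allI impI)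
        subgoal premises h for N ls U0 \<epsilon> ch Sg l x0 y
        proof -
          note l = scale_thresholds[OF h(6)]
          have "volume_regular_at \<omega> (1/3) \<eta> kr DS (4 * 2 ^ l)" using vol l(2) by blast
          moreover have "killed_hk_at \<omega> (1/9) kr DS ck1 ck2 (9 * 2 ^ (l - 1))" using khk l(3) by blast
          moreover have "U0 \<subseteq> Sinf \<omega>" using h(2) by (simp add: Ucal_def)
          ultimately show ?thesis unfolding K_def
            using hit_before_exit_at_scale assms(2,4,5,10,12) l(1) less_imp_le[OF h(3)] h(5,7-12)
            by blast
        qed
        done
    qed
    done
qed

end
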